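(* Let $1\le k\le n$ be integers and $f:\mathbb{F}_2^n\to\mathbb{F}_2$ a Boolean function. Then \[\mathrm{dt}_k(f)=\mathrm{add}_k(f)\prod_{i=n-k+1}^{n}\Big(1-\frac{1}{2^i}\Big).\] Equivalently, $\mathrm{add}_k(f)$ equals the proportion, among all tuples $(u_0,u_1,\dots,u_k)\in(\mathbb{F}_2^n)^{k+1}$ with $u_1,\dots,u_k$ linearly independent, of those for which $\bigoplus_{c_1,\dots,c_k\in\mathbb{F}_2} f\big((\bigoplus_{i=1}^k c_iu_i)\oplus u_0\big)\neq 0$.
   Context: $\oplus$ denotes addition in $\mathbb{F}_2$ and $\mathbb{F}_2^n$. Every Boolean function $f:\mathbb{F}_2^n\to\mathbb{F}_2$ has a unique algebraic normal form (ANF): a polynomial over $\mathbb{F}_2$ in $x_1,\dots,x_n$ of degree at most one in each variable whose polynomial function is $f$. For $1\le k\le n$, define \[\mathrm{dt}_k(f)=\frac{\big|\{(u_0,\dots,u_k)\in(\mathbb{F}_2^n)^{k+1}:\ \bigoplus_{c_1,\dots,c_k\in\mathbb{F}_2} f\big((\bigoplus_{i=1}^k c_iu_i)\oplus u_0\big)\neq0\}\big|}{2^{(k+1)n}}.\] For $M\in GL(n,\mathbb{F}_2)$, $v\in\mathbb{F}_2^n$, let $\varphi_{M,v}(x)=Mx\oplus v$. The degree-$k$ monomial density $\mathrm{dd}_k(f)$ is the number of monomials of degree $k$ having nonzero coefficient in the ANF of $f$ divided by $\binom{n}{k}$. The average degree-$k$ monomial density is \[\mathrm{add}_k(f)=\frac{\sum_{M\in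 GL(n,\mathbb{F}_2),\,v\in\mathbb{F}_2^n}\mathrm{dd}_k(f\circ\varphi_{M,v})}{2^n(2^n-1)(2^n-2)\cdots(2^n-2^{n-1})}.\] *)

theory Defs
  imports Complex_Main "HOL-Library.FuncSet"
begin

text \<open>Vectors of F_2^n are modelled as functions nat => bool (True = 1) vanishing
  outside the indices 0..n-1; addition in F_2 is inequality of booleans (xor).\<close>

definition vecs :: "nat \<Rightarrow> (nat \<Rightarrow> bool) set" where
  "vecs n = {x. \<forall>i. n \<le> i \<longrightarrow> \<not> x i}"

definition vzero :: "nat \<Rightarrow> bool" where
  "vzero = (\<lambda>_. False)"

definition vadd :: "(nat \<Rightarrow> bool) \<Rightarrow> (nat \<Rightarrow> bool) \<Rightarrow> (nat \<Rightarrow> bool)" where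
  "vadd x y = (\<lambda>i. x i \<noteq> y i)"

definition vsum :: "(nat \<Rightarrow> nat \<Rightarrow> bool) \<Rightarrow> nat set \<Rightarrow> (nat \<Rightarrow> bool)" where
  "vsum u C = (\<lambda>j. odd (card {i\<in>C. u i j}))"

text \<open>Derivative-type sum: XOR over c_1..c_k in F_2 of f(sum_i c_i u_i + u_0);
  a choice (c_1,...,c_k) is encoded as the set C of indices i with c_i = 1.\<close>
definition deriv_val :: "((nat \<Rightarrow> bool) \<Rightarrow> bool) \<Rightarrow> nat \<Rightarrow> (nat \<Rightarrow> nat \<Rightarrow> bool) \<Rightarrow> bool" where
  "deriv_val f k u = odd (card {C \<in> Pow {1..k}. f (vadd (vsum u C) (u 0))})"

definition tuples :: "nat \<Rightarrow> nat \<Rightarrow> (nat \<Rightarrow> nat \<Rightarrow> bool) set" where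
  "tuples n k = PiE {0..k} (\<lambda>_. vecs n)"

definition dt :: "nat \<Rightarrow> nat \<Rightarrow> ((nat \<Rightarrow> bool) \<Rightarrow> bool) \<Rightarrow> real" where
  "dt n k f = real (card {u \<in> tuples n k. deriv_val f k u}) / 2 ^ ((k + 1) * n)"

definition lin_indep :: "nat \<Rightarrow> (nat \<Rightarrow> nat \<Rightarrow> bool) \<Rightarrow> bool" where
  "lin_indep k u = (\<forall>C. C \<subseteq> {1..k} \<longrightarrow> C \<noteq> {} \<longrightarrow> vsum u C \<noteq> vzero)"

text \<open>Algebraic normal form: the coefficient function a on subsets S of {0..<n}
  (monomial prod_{i in S} x_i) whose polynomial function agrees with f on F_2^n.\<close>
definition anf :: "nat \<Rightarrow> ((nat \<Rightarrow> bool) \<Rightarrow> bool) \<Rightarrow> nat set \<Rightarrow> bool" where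
  "anf n f = (THE a. (\<forall>S. a S \<longrightarrow> S \<subseteq> {0..<n}) \<and>
      (\<forall>x\<in>vecs n. f x = odd (card {S. S \<subseteq> {0..<n} \<and> a S \<and> (\<forall>i\<in>S. x i)})))"

definition dd :: "nat \<Rightarrow> nat \<Rightarrow> ((nat \<Rightarrow> bool) \<Rightarrow> bool) \<Rightarrow> real" where
  "dd n k f = real (card {S. S \<subseteq> {0..<n} \<and> card S = k \<and> anf n f S}) / real (n choose k)"

definition mats :: "nat \<Rightarrow> (nat \<Rightarrow> nat \<Rightarrow> bool) set" where
  "mats n = {M. \<forall>i j. n \<le> i \<or> n \<le> j \<longrightarrow> \<not> M i j}"

definition matmul :: "nat \<Rightarrow> (nat \<Rightarrow> nat \<Rightarrow> bool) \<Rightarrow> (nat \<Rightarrow> nat \<Rightarrow> bool) \<Rightarrow> (nat \<Rightarrow> nat \<Rightarrow> bool)" where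
  "matmul n M N = (\<lambda>i j. i < n \<and> j < n \<and> odd (card {l\<in>{0..<n}. M i l \<and> N l j}))"

definition idm :: "nat \<Rightarrow> (nat \<Rightarrow> nat \<Rightarrow> bool)" where
  "idm n = (\<lambda>i j. i < n \<and> i = j)"

definition GL :: "nat \<Rightarrow> (nat \<Rightarrow> nat \<Rightarrow> bool) set" where
  "GL n = {M \<in> mats n. \<exists>N \<in> mats n. matmul n M N = idm n}"

definition mulv :: "nat \<Rightarrow> (nat \<Rightarrow> nat \<Rightarrow> bool) \<Rightarrow> (nat \<Rightarrow> bool) \<Rightarrow> (nat \<Rightarrow> bool)" where
  "mulv n M x = (\<lambda>i. i < n \<and> odd (card {j\<in>{0..<n}. M i j \<and> x j}))"

definition aff :: "nat \<Rightarrow> (nat \<Rightarrow> nat \<Rightarrow> bool) \<Rightarrow> (nat \<Rightarrow> bool) \<Rightarrow> (nat \<Rightarrow> bool) \<Rightarrow> (nat \<Rightarrow> bool)" where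
  "aff n M v x = vadd (mulv n M x) v"

definition add_dens :: "nat \<Rightarrow> nat \<Rightarrow> ((nat \<Rightarrow> bool) \<Rightarrow> bool) \<Rightarrow> real" where
  "add_dens n k f =
     (\<Sum>M\<in>GL n. \<Sum>v\<in>vecs n. dd n k (f \<circ> aff n M v)) /
     (2 ^ n * (\<Prod>i<n. (2 ^ n - 2 ^ i)))"

end

theory Submission
  imports Defs "HOL-Library.Z2"
begin

text \<open>Every affine image f \<circ> (Mx + v) has, as ANF coefficient of the monomial
  x_{j_1}\<dots>x_{j_k}, the XOR of f over the affine subspace v + span(M e_{j_1},\<dots>,M e_{j_k})
  (Moebius inversion over F_2). So summing the degree-k density over all (M, v) counts
  every tuple (v, u_1, \<dots>, u_k) with u_1, \<dots>, u_k independent equally often, namely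
  once for every way of completing (u_1, \<dots>, u_k) to a basis. Dependent tuples contribute
  nothing to dt_k, since their derivative sums cancel in pairs; the product in the
  theorem is the proportion of independent tuples.\<close>

declare sum_of_bool_eq [simp del]
  \<comment> \<open>keeps F_2-valued sums of truth values from being turned into cardinalities\<close>

subsection \<open>Parity and sums in F_2\<close>

lemma of_bool_odd_card_eq_sum:
  assumes "finite A"
  shows "of_bool (odd (card {x\<in>A. P x})) = (\<Sum>x\<in>A. of_bool (P x) :: bit)"
proof -
  have "(of_nat m :: bit) = of_bool (odd m)" for m
    by (induction m) auto
  moreover have "A \<inter> {x. P x} = {x\<in>A. P x}" by auto
  ultimately show ?thesis
    using assms by (simp add: sum_of_bool_eq)
qed

lemma of_bool_neq_bit: "(of_bool (a \<noteq> b) :: bit) = of_bool a + of_bool b"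
  by (cases a; cases b) auto

lemma bit_add_self [simp]: "(x::bit) + x = 0"
  by (cases x) auto

lemma of_bool_bit_eq_iff: "(of_bool a :: bit) = of_bool b \<longleftrightarrow> a = b"
  by (cases a; cases b) auto

lemma of_bool_bit_eq_one_iff: "(of_bool a :: bit) = 1 \<longleftrightarrow> a"
  by (cases a) auto

lemma of_bool_bit_eq_one: "(of_bool (b = 1) :: bit) = b"
  by (cases b) auto

lemma sum_sym_diff_bit:
  assumes "finite A" "finite B"
  shows "(\<Sum>x\<in>(A - B) \<union> (B - A). h x :: bit) = sum h A + sum h B"
proof -
  have "sum h A = sum h (A - B) + sum h (A \<inter> B)"
    using assms by (metis add.commute sum.Int_Diff)
  moreover have "sum h B = sum h (B - A) + sum h (A \<inter> B)"
    using assms by (metis Int_commute add.commute sum.Int_Diff)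
  moreover have "(\<Sum>x\<in>(A - B) \<union> (B - A). h x) = sum h (A - B) + sum h (B - A)"
    using assms by (intro sum.union_disjoint) auto
  moreover have "a + c = (a + b) + (c + b)" for a b c :: bit
    by (cases a; cases b; cases c) simp_all
  ultimately show ?thesis by metis
qed

lemma even_card_if_fixpoint_free_involution:
  assumes "finite X" and "\<And>x. x \<in> X \<Longrightarrow> t x \<in> X" and "\<And>x. x \<in> X \<Longrightarrow> t (t x) = x"
    and "\<And>x. x \<in> X \<Longrightarrow> t x \<noteq> x"
  shows "even (card X)"
  using assms
proof (induction "card X" arbitrary: X rule: less_induct)
  case less
  show ?case
  proof (cases "X = {}")
    case False
    then obtain x where x: "x \<in> X" by blast
    let ?Y = "X - {x, t x}"
    have pair: "{x, t x} \<subseteq> X" "card {x, t x} = 2"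
      using less.prems(2,4)[OF x] x by auto
    then have "card {x, t x} \<le> card X"
      using less.prems(1) by (intro card_mono)
    then have "card X = card ?Y + 2"
      using less.prems(1) pair by (simp add: card_Diff_subset)
    moreover have "even (card ?Y)"
      by (rule less.hyps) (use less.prems x \<open>card X = card ?Y + 2\<close> in \<open>auto, metis\<close>)
    ultimately show ?thesis by simp
  qed simp
qed

subsection \<open>F_2-linear combinations\<close>

definition char_vec :: "nat set \<Rightarrow> nat \<Rightarrow> bool" where
  "char_vec T = (\<lambda>i. i \<in> T)"

lemma of_bool_vsum:
  assumes "finite C"
  shows "(of_bool (vsum u C j) :: bit) = (\<Sum>i\<in>C. of_bool (u i j))"
  unfolding vsum_def using of_bool_odd_card_eq_sum[OF assms] by simp

lemma vsum_sym_diff: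
  assumes "finite A" "finite B"
  shows "vsum u ((A - B) \<union> (B - A)) = vadd (vsum u A) (vsum u B)"
proof
  fix j
  have "(of_bool (vsum u ((A - B) \<union> (B - A)) j) :: bit)
      = (\<Sum>i\<in>A. of_bool (u i j)) + (\<Sum>i\<in>B. of_bool (u i j))"
    using assms by (simp add: of_bool_vsum sum_sym_diff_bit)
  then show "vsum u ((A - B) \<union> (B - A)) j = vadd (vsum u A) (vsum u B) j"
    using assms by (simp add: of_bool_vsum vadd_def of_bool_neq_bit flip: of_bool_bit_eq_iff)
qed

lemma vsum_insert:
  assumes "finite C" "b \<notin> C"
  shows "vsum u (insert b C) = vadd (u b) (vsum u C)"
proof
  fix j
  show "vsum u (insert b C) j = vadd (u b) (vsum u C) j"
    using assms by (simp add: of_bool_vsum vadd_def of_bool_neq_bit flip: of_bool_bit_eq_iff)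
qed

lemma vsum_empty [simp]: "vsum u {} = vzero"
  by (simp add: vsum_def vzero_def)

lemma vadd_eq_vzero_iff: "vadd x y = vzero \<longleftrightarrow> x = y"
  by (auto simp: vadd_def vzero_def fun_eq_iff)

lemma vsum_cong: "(\<And>i. i \<in> C \<Longrightarrow> u i = w i) \<Longrightarrow> vsum u C = vsum w C"
  unfolding vsum_def by (rule ext) (metis (mono_tags, lifting) Collect_cong)

lemma vsum_image:
  assumes "inj_on \<sigma> C"
  shows "vsum w (\<sigma> ` C) = vsum (w \<circ> \<sigma>) C"
proof
  fix j
  have "{i\<in>\<sigma> ` C. w i j} = \<sigma> ` {c\<in>C. w (\<sigma> c) j}" by auto
  moreover have "card (\<sigma> ` {c\<in>C. w (\<sigma> c) j}) = card {c\<in>C. w (\<sigma> c) j}"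
    by (rule card_image) (rule inj_on_subset[OF assms], blast)
  ultimately show "vsum w (\<sigma> ` C) j = vsum (w \<circ> \<sigma>) C j"
    unfolding vsum_def by simp
qed

lemma vsum_vecs: "(\<And>i. i \<in> C \<Longrightarrow> u i \<in> vecs n) \<Longrightarrow> vsum u C \<in> vecs n"
proof -
  assume "\<And>i. i \<in> C \<Longrightarrow> u i \<in> vecs n"
  then have "\<And>i. n \<le> i \<Longrightarrow> {l\<in>C. u l i} = {}" by (auto simp: vecs_def)
  then show ?thesis unfolding vecs_def vsum_def
    by (intro CollectI allI impI) (metis card.empty even_zero)
qed

lemma vadd_vecs: "x \<in> vecs n \<Longrightarrow> y \<in> vecs n \<Longrightarrow> vadd x y \<in> vecs n"
  unfolding vadd_def vecs_def by auto

lemma vadd_char_vec: "vadd (char_vec X) (char_vec Y) = char_vec ((X - Y) \<union> (Y - X))"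
  by (auto simp: vadd_def char_vec_def fun_eq_iff)

lemma vecs_eq_char_vec_image: "vecs n = char_vec ` Pow {0..<n}"
proof
  show "vecs n \<subseteq> char_vec ` Pow {0..<n}"
  proof
    fix x assume "x \<in> vecs n"
    then have "x = char_vec {i. x i}" "{i. x i} \<subseteq> {0..<n}"
      by (auto simp: char_vec_def vecs_def) (meson not_le)
    then show "x \<in> char_vec ` Pow {0..<n}" by blast
  qed
qed (auto simp: char_vec_def vecs_def)

lemma inj_char_vec: "inj char_vec"
  by (rule injI) (auto simp: char_vec_def fun_eq_iff)

lemma card_vecs: "card (vecs n) = 2 ^ n"
  by (simp add: vecs_eq_char_vec_image card_image inj_on_subset[OF inj_char_vec] card_Pow)

lemma finite_vecs [simp]: "finite (vecs n)"
  by (simp add: vecs_eq_char_vec_image)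

subsection \<open>Independent families and their extensions\<close>

definition indep_on :: "nat set \<Rightarrow> (nat \<Rightarrow> nat \<Rightarrow> bool) \<Rightarrow> bool" where
  "indep_on B w = (\<forall>C. C \<subseteq> B \<longrightarrow> C \<noteq> {} \<longrightarrow> vsum w C \<noteq> vzero)"

definition span_on :: "nat set \<Rightarrow> (nat \<Rightarrow> nat \<Rightarrow> bool) \<Rightarrow> (nat \<Rightarrow> bool) set" where
  "span_on B w = vsum w ` Pow B"

lemma lin_indep_eq_indep_on: "lin_indep k u = indep_on {1..k} u"
  by (simp add: lin_indep_def indep_on_def)

lemma indep_on_empty [simp]: "indep_on {} w"
  unfolding indep_on_def by auto

lemma indep_on_subset: "A \<subseteq> B \<Longrightarrow> indep_on B w \<Longrightarrow> indep_on A w"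
  unfolding indep_on_def by blast

lemma indep_on_cong: "(\<And>i. i \<in> B \<Longrightarrow> w i = w' i) \<Longrightarrow> indep_on B w = indep_on B w'"
  unfolding indep_on_def by (metis (no_types, lifting) subset_iff vsum_cong)

lemma span_on_cong: "(\<And>i. i \<in> B \<Longrightarrow> w i = w' i) \<Longrightarrow> span_on B w = span_on B w'"
  unfolding span_on_def by (intro image_cong refl vsum_cong) auto

lemma span_on_vecs: "(\<And>i. i \<in> B \<Longrightarrow> w i \<in> vecs n) \<Longrightarrow> span_on B w \<subseteq> vecs n"
  unfolding span_on_def by (auto intro!: vsum_vecs)

lemma finite_span_on: "finite B \<Longrightarrow> finite (span_on B w)"
  unfolding span_on_def by simp

lemma indep_on_image_iff:
  assumes "inj_on \<sigma> B"
  shows "indep_on (\<sigma> ` B) w \<longleftrightarrow> indep_on B (w \<circ> \<sigma>)"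
proof -
  have sums: "vsum w (\<sigma> ` C) = vsum (w \<circ> \<sigma>) C" if "C \<subseteq> B" for C
    by (rule vsum_image[OF inj_on_subset[OF assms that]])
  show ?thesis
    unfolding indep_on_def
  proof (intro iffI allI impI)
    fix C assume "\<forall>D. D \<subseteq> \<sigma> ` B \<longrightarrow> D \<noteq> {} \<longrightarrow> vsum w D \<noteq> vzero" "C \<subseteq> B" "C \<noteq> {}"
    then show "vsum (w \<circ> \<sigma>) C \<noteq> vzero"
      using sums[of C] by (metis image_is_empty image_mono)
  next
    fix D assume indep: "\<forall>C. C \<subseteq> B \<longrightarrow> C \<noteq> {} \<longrightarrow> vsum (w \<circ> \<sigma>) C \<noteq> vzero"
      and D: "D \<subseteq> \<sigma> ` B" "D \<noteq> {}"
    then obtain C where "C \<subseteq> B" "D = \<sigma> ` C"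
      by (auto simp: subset_image_iff)
    then show "vsum w D \<noteq> vzero"
      using indep sums D(2) by auto
  qed
qed

lemma inj_on_vsum_Pow:
  assumes "finite B" "indep_on B w"
  shows "inj_on (vsum w) (Pow B)"
proof (rule inj_onI)
  fix C1 C2 assume C: "C1 \<in> Pow B" "C2 \<in> Pow B" "vsum w C1 = vsum w C2"
  let ?D = "(C1 - C2) \<union> (C2 - C1)"
  have "finite C1" "finite C2"
    using assms(1) C(1,2) finite_subset by auto
  then have "vsum w ?D = vzero"
    using vsum_sym_diff C(3) vadd_eq_vzero_iff by metis
  moreover have "?D \<subseteq> B"
    using C(1,2) by auto
  ultimately have "?D = {}"
    using assms(2) unfolding indep_on_def by metis
  then show "C1 = C2" by auto
qed

lemma card_span_on:
  assumes "finite B" "indep_on B w"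
  shows "card (span_on B w) = 2 ^ card B"
  unfolding span_on_def using card_image[OF inj_on_vsum_Pow[OF assms]] assms(1)
  by (simp add: card_Pow)

lemma indep_on_insert_iff:
  assumes "finite B" "b \<notin> B"
  shows "indep_on (insert b B) w \<longleftrightarrow> indep_on B w \<and> w b \<notin> span_on B w"
proof -
  have indep_on_iff: "indep_on X w \<longleftrightarrow> (\<forall>C\<in>Pow X. C \<noteq> {} \<longrightarrow> vsum w C \<noteq> vzero)" for X
    by (auto simp: indep_on_def)
  have ball_Pow_insert: "(\<forall>C\<in>Pow (insert b B). P C) \<longleftrightarrow>
      (\<forall>C\<in>Pow B. P C) \<and> (\<forall>C\<in>Pow B. P (insert b C))" for P
    by (auto simp: Pow_insert)
  have "vsum w (insert b C) \<noteq> vzero \<longleftrightarrow> w b \<noteq> vsum w C" if "C \<in> Pow B" for C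
  proof -
    have "finite C" "b \<notin> C"
      using that assms by (auto intro: finite_subset)
    then show ?thesis
      by (simp add: vsum_insert vadd_eq_vzero_iff)
  qed
  then have "indep_on (insert b B) w \<longleftrightarrow> indep_on B w \<and> (\<forall>C\<in>Pow B. w b \<noteq> vsum w C)"
    unfolding indep_on_iff ball_Pow_insert by simp
  then show ?thesis
    by (auto simp: span_on_def)
qed

definition indep_ext :: "nat \<Rightarrow> nat set \<Rightarrow> nat set \<Rightarrow> (nat \<Rightarrow> nat \<Rightarrow> bool) \<Rightarrow>
    (nat \<Rightarrow> nat \<Rightarrow> bool) set" where
  "indep_ext n B A w0 = {w \<in> PiE B (\<lambda>_. vecs n). indep_on B w \<and> (\<forall>a\<in>A. w a = w0 a)}"

lemma finite_indep_ext: "finite B \<Longrightarrow> finite (indep_ext n B A w0)"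
  unfolding indep_ext_def
  by (rule finite_subset[of _ "PiE B (\<lambda>_. vecs n)"]) (auto intro: finite_PiE)

lemma indep_ext_self:
  assumes "indep_on A w0" "\<forall>a\<in>A. w0 a \<in> vecs n"
  shows "indep_ext n A A w0 = {restrict w0 A}"
proof -
  have "restrict w0 A \<in> indep_ext n A A w0"
    unfolding indep_ext_def using assms indep_on_cong[of A "restrict w0 A" w0] by auto
  moreover have "w = restrict w0 A" if "w \<in> indep_ext n A A w0" for w
    using that unfolding indep_ext_def by (auto simp: PiE_def extensional_def fun_eq_iff)
  ultimately show ?thesis by blast
qed

text \<open>A new vector may be anything outside the 2^|B| elements of the current span.\<close>

lemma card_indep_ext_insert:
  assumes fin: "finite B" and b: "b \<notin> B" and AB: "A \<subseteq> B"
  shows "card (indep_ext n (insert b B) A w0) = card (indep_ext n B A w0) * (2 ^ n - 2 ^ card B)"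
proof -
  let ?S = "SIGMA w:indep_ext n B A w0. vecs n - span_on B w"
  have bij: "bij_betw (\<lambda>w. (restrict w B, w b)) (indep_ext n (insert b B) A w0) ?S"
  proof (rule bij_betw_byWitness[where f' = "\<lambda>(w, x). w(b := x)"])
    show "(\<lambda>w. (restrict w B, w b)) ` indep_ext n (insert b B) A w0 \<subseteq> ?S"
    proof (rule image_subsetI)
      fix w assume w: "w \<in> indep_ext n (insert b B) A w0"
      then have "indep_on B w \<and> w b \<notin> span_on B w"
        using indep_on_insert_iff[OF fin b] unfolding indep_ext_def by blast
      moreover have "indep_on B (restrict w B) = indep_on B w" "span_on B (restrict w B) = span_on B w"
        using indep_on_cong[of B "restrict w B" w] span_on_cong[of B "restrict w B" w] by simp_all
      ultimately show "(restrict w B, w b) \<in> ?S"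
        using w AB unfolding indep_ext_def by auto
    qed
    show "(\<lambda>(w, x). w(b := x)) ` ?S \<subseteq> indep_ext n (insert b B) A w0"
    proof clarify
      fix w x assume w: "w \<in> indep_ext n B A w0" and x: "x \<in> vecs n" "x \<notin> span_on B w"
      have "indep_on B (w(b := x)) = indep_on B w" "span_on B (w(b := x)) = span_on B w"
        using b by (intro indep_on_cong span_on_cong; auto)+
      then have "indep_on (insert b B) (w(b := x))"
        using indep_on_insert_iff[OF fin b] w x unfolding indep_ext_def by simp
      then show "w(b := x) \<in> indep_ext n (insert b B) A w0"
        using w x AB b unfolding indep_ext_def by (auto simp: PiE_def extensional_def)
    qed
  qed (use b in \<open>auto simp: indep_ext_def PiE_def extensional_def fun_eq_iff\<close>)
  have "card (vecs n - span_on B w) = 2 ^ n - 2 ^ card B" if "w \<in> indep_ext n B A w0" for w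
  proof -
    have "span_on B w \<subseteq> vecs n"
      using that unfolding indep_ext_def by (intro span_on_vecs) auto
    then show ?thesis
      using that card_span_on[OF fin] card_vecs
      by (simp add: card_Diff_subset finite_span_on[OF fin] indep_ext_def)
  qed
  then have "card ?S = card (indep_ext n B A w0) * (2 ^ n - 2 ^ card B)"
    using finite_indep_ext[OF fin] by (simp add: card_SigmaI)
  then show ?thesis
    using bij_betw_same_card[OF bij] by simp
qed

lemma card_indep_ext_Un:
  assumes "finite F" "finite A" "A \<inter> F = {}" "indep_on A w0" "\<forall>a\<in>A. w0 a \<in> vecs n"
  shows "card (indep_ext n (A \<union> F) A w0) = (\<Prod>i\<in>{card A..<card A + card F}. 2 ^ n - 2 ^ i)"
  using assms(1,3)
proof (induction F rule: finite_induct)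
  case empty
  then show ?case using indep_ext_self[OF assms(4,5)] by simp
next
  case (insert b F)
  have "card (A \<union> F) = card A + card F"
    using insert assms(2) by (intro card_Un_disjoint) auto
  then have "card (indep_ext n (insert b (A \<union> F)) A w0) =
      card (indep_ext n (A \<union> F) A w0) * (2 ^ n - 2 ^ (card A + card F))"
    using card_indep_ext_insert[of "A \<union> F" b A n w0] insert assms(2) by simp
  then show ?case using insert by simp
qed

lemma card_indep_ext:
  assumes "finite B" "A \<subseteq> B" "indep_on A w0" "\<forall>a\<in>A. w0 a \<in> vecs n"
  shows "card (indep_ext n B A w0) = (\<Prod>i\<in>{card A..<card B}. 2 ^ n - 2 ^ i)"
proof -
  have "B = A \<union> (B - A)" "card B = card A + card (B - A)"
    using assms(1,2) by (auto simp: card_Diff_subset card_mono finite_subset)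
  then show ?thesis
    using card_indep_ext_Un[of "B - A" A w0 n] assms finite_subset by (metis Diff_disjoint finite_Diff)
qed

text \<open>Translating by a vanishing combination of u_1, \<dots>, u_k pairs off the terms of the
  derivative sum.\<close>

lemma not_deriv_val_if_not_lin_indep:
  assumes "\<not> lin_indep k u"
  shows "\<not> deriv_val f k u"
proof -
  obtain C0 where C0: "C0 \<subseteq> {1..k}" "C0 \<noteq> {}" "vsum u C0 = vzero"
    using assms unfolding lin_indep_def by blast
  let ?X = "{C \<in> Pow {1..k}. f (vadd (vsum u C) (u 0))}"
  let ?t = "\<lambda>C. (C - C0) \<union> (C0 - C)"
  have sym_diff_invariant: "vsum u (?t C) = vsum u C" if "C \<subseteq> {1..k}" for C
  proof -
    have "finite C" "finite C0"
      using that C0(1) by (auto intro: finite_subset)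
    then show ?thesis
      using vsum_sym_diff[of C C0 u] C0(3) by (simp add: vadd_def vzero_def)
  qed
  have "even (card ?X)"
  proof (rule even_card_if_fixpoint_free_involution)
    show "?t C \<in> ?X" if "C \<in> ?X" for C
      using that C0(1) sym_diff_invariant by auto
    show "?t (?t C) = C" for C
      by auto
    show "?t C \<noteq> C" for C
      using C0(2) by auto
  qed simp
  then show ?thesis unfolding deriv_val_def by simp
qed

subsection \<open>The algebraic normal form via Moebius inversion\<close>

lemma sum_Pow_insert:
  assumes "finite S" "x \<notin> S"
  shows "(\<Sum>T\<in>Pow (insert x S). g T) = (\<Sum>T\<in>Pow S. g T) + (\<Sum>T\<in>Pow S. g (insert x T))"
proof -
  have "inj_on (insert x) (Pow S)"
    using assms(2) by (intro inj_onI) (metis Pow_iff insert_ident subsetD)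
  then have "(\<Sum>T\<in>insert x ` Pow S. g T) = (\<Sum>T\<in>Pow S. g (insert x T))"
    by (simp add: sum.reindex)
  moreover have "(\<Sum>T\<in>Pow S \<union> insert x ` Pow S. g T) =
      (\<Sum>T\<in>Pow S. g T) + (\<Sum>T\<in>insert x ` Pow S. g T)"
    using assms by (intro sum.union_disjoint) auto
  ultimately show ?thesis
    by (simp add: Pow_insert)
qed

text \<open>Over F_2, summing twice over subsets is the identity: every T \<subset> X lies in an even
  number 2^{|X - T|} of intermediate sets.\<close>

lemma sum_Pow_sum_Pow_bit:
  assumes "finite X"
  shows "(\<Sum>S\<in>Pow X. \<Sum>T\<in>Pow S. h T :: bit) = h X"
  using assms
proof (induction X arbitrary: h rule: finite_induct)
  case (insert x X)
  have fin: "finite S" "x \<notin> S" if "S \<in> Pow X" for S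
    using that insert finite_subset by auto
  have "(\<Sum>S\<in>Pow (insert x X). \<Sum>T\<in>Pow S. h T) =
        (\<Sum>S\<in>Pow X. \<Sum>T\<in>Pow S. h T) + (\<Sum>S\<in>Pow X. \<Sum>T\<in>Pow (insert x S). h T)"
    by (rule sum_Pow_insert[OF insert(1,2)])
  also have "(\<Sum>S\<in>Pow X. \<Sum>T\<in>Pow (insert x S). h T) =
        (\<Sum>S\<in>Pow X. \<Sum>T\<in>Pow S. h T) + (\<Sum>S\<in>Pow X. \<Sum>T\<in>Pow S. h (insert x T))"
    by (simp only: sum_Pow_insert[OF fin] sum.distrib cong: sum.cong)
  also have "(\<Sum>S\<in>Pow X. \<Sum>T\<in>Pow S. h (insert x T)) = h (insert x X)"
    by (rule insert(3))
  finally show ?case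
    by (simp only: add.assoc[symmetric] bit_add_self add_0_left)
qed simp

definition is_anf :: "nat \<Rightarrow> ((nat \<Rightarrow> bool) \<Rightarrow> bool) \<Rightarrow> (nat set \<Rightarrow> bool) \<Rightarrow> bool" where
  "is_anf n g a \<longleftrightarrow> (\<forall>S. a S \<longrightarrow> S \<subseteq> {0..<n}) \<and>
      (\<forall>x\<in>vecs n. g x = odd (card {S. S \<subseteq> {0..<n} \<and> a S \<and> (\<forall>i\<in>S. x i)}))"

lemma is_anf_char_vec:
  assumes "is_anf n g a" "X \<subseteq> {0..<n}"
  shows "(of_bool (g (char_vec X)) :: bit) = (\<Sum>S\<in>Pow X. of_bool (a S))"
proof -
  have "char_vec X \<in> vecs n"
    using assms(2) by (auto simp: vecs_eq_char_vec_image)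
  moreover have "{S. S \<subseteq> {0..<n} \<and> a S \<and> (\<forall>i\<in>S. char_vec X i)} = {S\<in>Pow X. a S}"
    using assms(2) by (auto simp: char_vec_def)
  ultimately have "g (char_vec X) = odd (card {S\<in>Pow X. a S})"
    using assms(1) unfolding is_anf_def by simp
  moreover have "finite (Pow X)"
    using assms(2) finite_subset by auto
  ultimately show ?thesis
    using of_bool_odd_card_eq_sum[of "Pow X" a] by simp
qed

lemma is_anf_moebius:
  "is_anf n g (\<lambda>S. S \<subseteq> {0..<n} \<and> (\<Sum>T\<in>Pow S. of_bool (g (char_vec T)) :: bit) = 1)"
  (is "is_anf n g ?a")
  unfolding is_anf_def
proof (intro conjI allI impI ballI)
  fix x assume "x \<in> vecs n"
  then obtain X where X: "X \<subseteq> {0..<n}" "x = char_vec X"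
    by (auto simp: vecs_eq_char_vec_image)
  then have "finite X" by (auto intro: finite_subset)
  have "{S. S \<subseteq> {0..<n} \<and> ?a S \<and> (\<forall>i\<in>S. x i)} = {S\<in>Pow X. ?a S}"
    using X by (auto simp: char_vec_def)
  moreover have "(of_bool (?a S) :: bit) = (\<Sum>T\<in>Pow S. of_bool (g (char_vec T)))" if "S \<in> Pow X" for S
  proof -
    have "S \<subseteq> {0..<n}"
      using that X by auto
    then show ?thesis
      by (simp only: simp_thms of_bool_bit_eq_one)
  qed
  ultimately have "(of_bool (odd (card {S. S \<subseteq> {0..<n} \<and> ?a S \<and> (\<forall>i\<in>S. x i)})) :: bit) =
      (\<Sum>S\<in>Pow X. \<Sum>T\<in>Pow S. of_bool (g (char_vec T)))"
    using of_bool_odd_card_eq_sum[OF finite_Pow_iff[THEN iffD2, OF \<open>finite X\<close>], of ?a]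
    by (simp only: cong: sum.cong)
  also have "\<dots> = of_bool (g x)"
    using sum_Pow_sum_Pow_bit[OF \<open>finite X\<close>] X(2) by simp
  finally show "g x = odd (card {S. S \<subseteq> {0..<n} \<and> ?a S \<and> (\<forall>i\<in>S. x i)})"
    by (simp add: of_bool_bit_eq_iff)
qed auto

lemma is_anf_unique:
  assumes "is_anf n g a"
  shows "a S \<longleftrightarrow> S \<subseteq> {0..<n} \<and> (\<Sum>T\<in>Pow S. of_bool (g (char_vec T)) :: bit) = 1"
proof (cases "S \<subseteq> {0..<n}")
  case True
  then have "finite S" by (auto intro: finite_subset)
  have "(\<Sum>T\<in>Pow S. of_bool (g (char_vec T)) :: bit) = (\<Sum>T\<in>Pow S. \<Sum>U\<in>Pow T. of_bool (a U))"
    using True by (intro sum.cong refl is_anf_char_vec[OF assms]) auto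
  also have "\<dots> = of_bool (a S)"
    by (rule sum_Pow_sum_Pow_bit[OF \<open>finite S\<close>])
  finally have "(\<Sum>T\<in>Pow S. of_bool (g (char_vec T)) :: bit) = of_bool (a S)" .
  then show ?thesis
    using True by (simp only: simp_thms of_bool_bit_eq_one_iff)
qed (use assms in \<open>auto simp: is_anf_def\<close>)

lemma anf_iff:
  "anf n g S \<longleftrightarrow> S \<subseteq> {0..<n} \<and> (\<Sum>T\<in>Pow S. of_bool (g (char_vec T)) :: bit) = 1"
proof -
  have "anf n g = (THE a. is_anf n g a)"
    unfolding anf_def is_anf_def by simp
  also have "\<dots> = (\<lambda>S. S \<subseteq> {0..<n} \<and> (\<Sum>T\<in>Pow S. of_bool (g (char_vec T)) :: bit) = 1)"
    by (rule the_equality) (rule is_anf_moebius, rule ext, erule is_anf_unique)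
  finally show ?thesis by simp
qed

subsection \<open>Invertible matrices\<close>

definition cols :: "nat \<Rightarrow> (nat \<Rightarrow> nat \<Rightarrow> bool) \<Rightarrow> (nat \<Rightarrow> nat \<Rightarrow> bool)" where
  "cols n M = (\<lambda>j\<in>{0..<n}. \<lambda>i. M i j)"

definition mat_of_cols :: "nat \<Rightarrow> (nat \<Rightarrow> nat \<Rightarrow> bool) \<Rightarrow> (nat \<Rightarrow> nat \<Rightarrow> bool)" where
  "mat_of_cols n w = (\<lambda>i j. j < n \<and> w j i)"

lemma cols_vecs: "M \<in> mats n \<Longrightarrow> j \<in> {0..<n} \<Longrightarrow> cols n M j \<in> vecs n"
  by (auto simp: cols_def mats_def vecs_def)

lemma cols_PiE: "M \<in> mats n \<Longrightarrow> cols n M \<in> PiE {0..<n} (\<lambda>_. vecs n)"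
  using cols_vecs by (auto simp: cols_def)

lemma mat_of_cols_cols: "M \<in> mats n \<Longrightarrow> mat_of_cols n (cols n M) = M"
  by (auto simp: mats_def cols_def mat_of_cols_def fun_eq_iff)

lemma cols_mat_of_cols:
  assumes "w \<in> PiE {0..<n} (\<lambda>_. vecs n)"
  shows "cols n (mat_of_cols n w) = w"
proof -
  have "w \<in> extensional {0..<n}"
    using assms by (simp add: PiE_def)
  then show ?thesis
    unfolding cols_def by (rule extensionalityI[OF restrict_extensional]) (auto simp: mat_of_cols_def)
qed

lemma mat_of_cols_mats: "w \<in> PiE {0..<n} (\<lambda>_. vecs n) \<Longrightarrow> mat_of_cols n w \<in> mats n"
  unfolding mats_def vecs_def PiE_def Pi_def mat_of_cols_def by auto

lemma mulv_char_vec: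
  assumes "M \<in> mats n" "X \<subseteq> {0..<n}"
  shows "mulv n M (char_vec X) = vsum (cols n M) X"
proof
  fix i
  have e: "{j\<in>{0..<n}. M i j \<and> char_vec X j} = {j\<in>X. M i j}" "{j\<in>X. cols n M j i} = {j\<in>X. M i j}"
    using assms(2) by (auto simp: char_vec_def cols_def)
  have "card {j\<in>X. M i j} = 0" if "\<not> i < n"
    using assms(1) that by (auto simp: mats_def)
  then show "mulv n M (char_vec X) i = vsum (cols n M) X i"
    unfolding mulv_def vsum_def e by (cases "i < n") auto
qed

lemma mulv_vecs: "mulv n M x \<in> vecs n"
  by (simp add: mulv_def vecs_def)

lemma mulv_vadd:
  assumes M: "M \<in> mats n" and "x \<in> vecs n" "y \<in> vecs n"
  shows "mulv n M (vadd x y) = vadd (mulv n M x) (mulv n M y)"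
proof -
  obtain X Y where XY: "X \<subseteq> {0..<n}" "x = char_vec X" "Y \<subseteq> {0..<n}" "y = char_vec Y"
    using assms(2,3) unfolding vecs_eq_char_vec_image by blast
  then have "finite X" "finite Y" "(X - Y) \<union> (Y - X) \<subseteq> {0..<n}"
    by (auto intro: finite_subset)
  with XY show ?thesis
    by (simp add: vadd_char_vec mulv_char_vec[OF M] vsum_sym_diff)
qed

lemma mulv_matmul_col:
  "j < n \<Longrightarrow> mulv n M (\<lambda>l. N l j) = (\<lambda>i. matmul n M N i j)"
  unfolding mulv_def matmul_def by simp

lemma inj_on_mulv_iff_surj:
  "inj_on (mulv n M) (vecs n) \<longleftrightarrow> mulv n M ` vecs n = vecs n"
proof
  assume "inj_on (mulv n M) (vecs n)"
  then show "mulv n M ` vecs n = vecs n"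
    using mulv_vecs by (intro endo_inj_surj) auto
qed (simp add: eq_card_imp_inj_on)

text \<open>The image of a linear map is closed under addition, so it is everything as soon as
  it contains the unit vectors.\<close>

lemma image_mulv_eq_vecs:
  assumes M: "M \<in> mats n" and unit: "\<And>j. j < n \<Longrightarrow> char_vec {j} \<in> mulv n M ` vecs n"
  shows "mulv n M ` vecs n = vecs n"
proof -
  have "char_vec X \<in> mulv n M ` vecs n" if "X \<subseteq> {0..<n}" for X
  proof -
    have "finite X" using that by (auto intro: finite_subset)
    then show ?thesis
      using that
    proof (induction X rule: finite_induct)
      case empty
      have "char_vec {} = mulv n M (char_vec {})"
        using mulv_char_vec[OF M, of "{}"] by (simp add: char_vec_def vzero_def)
      then show ?case
        by (rule image_eqI[where f = "mulv n M"]) (auto simp: vecs_eq_char_vec_image)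
    next
      case (insert j X)
      obtain y z where y: "char_vec X = mulv n M y" "y \<in> vecs n"
        and z: "char_vec {j} = mulv n M z" "z \<in> vecs n"
        using insert.IH unit insert.prems by (metis imageE insert_subset atLeastLessThan_iff)
      have "char_vec (insert j X) = vadd (char_vec {j}) (char_vec X)"
        using insert.hyps by (auto simp: vadd_def char_vec_def fun_eq_iff)
      also have "\<dots> = mulv n M (vadd z y)"
        unfolding y(1) z(1) by (rule mulv_vadd[OF M z(2) y(2), symmetric])
      finally show ?case
        using vadd_vecs[OF z(2) y(2)] by blast
    qed
  qed
  then show ?thesis
    using mulv_vecs by (auto simp: vecs_eq_char_vec_image)
qed

lemma inj_on_mulv_if_GL:
  assumes "M \<in> GL n"
  shows "inj_on (mulv n M) (vecs n)"
proof -
  obtain N where M: "M \<in> mats n" and N: "N \<in> mats n" "matmul n M N = idm n"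
    using assms unfolding GL_def by blast
  have "char_vec {j} \<in> mulv n M ` vecs n" if "j < n" for j
  proof (rule image_eqI)
    show "char_vec {j} = mulv n M (\<lambda>l. N l j)"
      using that by (simp add: mulv_matmul_col N(2)) (auto simp: idm_def char_vec_def)
    show "(\<lambda>l. N l j) \<in> vecs n"
      using N(1) by (auto simp: mats_def vecs_def)
  qed
  then show ?thesis
    using image_mulv_eq_vecs[OF M] inj_on_mulv_iff_surj by blast
qed

lemma GL_if_inj_on_mulv:
  assumes M: "M \<in> mats n" and "inj_on (mulv n M) (vecs n)"
  shows "M \<in> GL n"
proof -
  have "mulv n M ` vecs n = vecs n"
    using assms(2) by (simp add: inj_on_mulv_iff_surj)
  then have "\<exists>z. z \<in> vecs n \<and> mulv n M z = char_vec {j}" if "j < n" for j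
    using that by (metis (no_types, lifting) imageE vecs_eq_char_vec_image
        atLeastLessThan_iff empty_subsetI insert_subset image_eqI PowI zero_le)
  then obtain y where y: "\<And>j. j < n \<Longrightarrow> y j \<in> vecs n \<and> mulv n M (y j) = char_vec {j}"
    by metis
  have "mat_of_cols n y \<in> mats n"
    using y by (auto simp: mats_def mat_of_cols_def vecs_def)
  moreover have "matmul n M (mat_of_cols n y) = idm n"
  proof (intro ext)
    fix i j
    show "matmul n M (mat_of_cols n y) i j = idm n i j"
    proof (cases "j < n")
      case True
      then have "matmul n M (mat_of_cols n y) i j = mulv n M (y j) i"
        by (simp add: matmul_def mulv_def mat_of_cols_def)
      then show ?thesis
        using y[OF True] True by (auto simp: char_vec_def idm_def)
    qed (simp add: matmul_def idm_def)
  qed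
  ultimately show "M \<in> GL n"
    using M unfolding GL_def by blast
qed

lemma indep_on_cols_iff_inj_on_mulv:
  assumes M: "M \<in> mats n"
  shows "indep_on {0..<n} (cols n M) \<longleftrightarrow> inj_on (mulv n M) (vecs n)"
proof
  assume "indep_on {0..<n} (cols n M)"
  then have "inj_on (vsum (cols n M)) (Pow {0..<n})"
    by (simp add: inj_on_vsum_Pow)
  then show "inj_on (mulv n M) (vecs n)"
    unfolding vecs_eq_char_vec_image inj_on_def by (auto simp: mulv_char_vec[OF M])
next
  assume inj: "inj_on (mulv n M) (vecs n)"
  show "indep_on {0..<n} (cols n M)"
    unfolding indep_on_def
  proof (intro allI impI notI)
    fix C assume C: "C \<subseteq> {0..<n}" "C \<noteq> {}" "vsum (cols n M) C = vzero"
    then have "mulv n M (char_vec C) = mulv n M (char_vec {})"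
      by (simp add: mulv_char_vec[OF M])
    moreover have "char_vec C \<in> vecs n" "char_vec {} \<in> vecs n"
      using C(1) unfolding vecs_eq_char_vec_image by auto
    ultimately have "C = {}"
      using inj inj_char_vec by (metis inj_on_def injD)
    then show False using C(2) by blast
  qed
qed

lemma GL_iff_indep_on_cols: "M \<in> GL n \<longleftrightarrow> M \<in> mats n \<and> indep_on {0..<n} (cols n M)"
proof -
  have "GL n \<subseteq> mats n"
    by (auto simp: GL_def)
  then show ?thesis
    using inj_on_mulv_if_GL GL_if_inj_on_mulv indep_on_cols_iff_inj_on_mulv by blast
qed

lemma finite_mats: "finite (mats n)"
proof (rule finite_subset)
  show "mats n \<subseteq> (\<lambda>R i j. (i, j) \<in> R) ` Pow ({0..<n} \<times> {0..<n})"
  proof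
    fix M assume "M \<in> mats n"
    then have "{(i, j). M i j} \<subseteq> {0..<n} \<times> {0..<n}"
      by (auto simp: mats_def not_le[symmetric])
    then show "M \<in> (\<lambda>R i j. (i, j) \<in> R) ` Pow ({0..<n} \<times> {0..<n})"
      by (intro image_eqI[of _ _ "{(i, j). M i j}"]) auto
  qed
qed simp

lemma finite_GL: "finite (GL n)"
  by (rule finite_subset[OF _ finite_mats]) (auto simp: GL_def)

lemma bij_betw_cols_GL:
  assumes "S \<subseteq> {0..<n}"
  shows "bij_betw (cols n) {M \<in> GL n. \<forall>a\<in>S. (\<lambda>i. M i a) = w0 a} (indep_ext n {0..<n} S w0)"
proof (rule bij_betw_byWitness[where f' = "mat_of_cols n"])
  show "cols n ` {M \<in> GL n. \<forall>a\<in>S. (\<lambda>i. M i a) = w0 a} \<subseteq> indep_ext n {0..<n} S w0"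
    using assms by (auto simp: GL_iff_indep_on_cols indep_ext_def cols_PiE)
      (auto simp: cols_def mats_def vecs_def)
  show "mat_of_cols n ` indep_ext n {0..<n} S w0 \<subseteq> {M \<in> GL n. \<forall>a\<in>S. (\<lambda>i. M i a) = w0 a}"
    using assms by (auto simp: GL_iff_indep_on_cols indep_ext_def cols_mat_of_cols mat_of_cols_mats)
      (auto simp: mat_of_cols_def)
qed (auto simp: GL_def indep_ext_def mat_of_cols_cols cols_mat_of_cols)

lemma card_GL_fixed_cols:
  assumes "S \<subseteq> {0..<n}" "indep_on S w0" "\<forall>a\<in>S. w0 a \<in> vecs n"
  shows "card {M \<in> GL n. \<forall>a\<in>S. (\<lambda>i. M i a) = w0 a} = (\<Prod>i\<in>{card S..<n}. 2 ^ n - 2 ^ i)"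
  using bij_betw_same_card[OF bij_betw_cols_GL[OF assms(1)]] card_indep_ext[OF _ assms] by simp

lemma card_GL: "card (GL n) = (\<Prod>i<n. 2 ^ n - 2 ^ i)"
  using card_GL_fixed_cols[of "{}" n] by (simp add: atLeast0LessThan)

subsection \<open>Double counting\<close>

text \<open>For a bijection \<sigma> from {1..k} onto S, the tuple (v, M e_{\<sigma> 1}, \<dots>, M e_{\<sigma> k}).\<close>

definition aff_tuple :: "nat \<Rightarrow> nat \<Rightarrow> (nat \<Rightarrow> nat) \<Rightarrow> (nat \<Rightarrow> nat \<Rightarrow> bool) \<Rightarrow> (nat \<Rightarrow> bool) \<Rightarrow>
    (nat \<Rightarrow> nat \<Rightarrow> bool)" where
  "aff_tuple n k \<sigma> M v = (\<lambda>j\<in>{0..k}. if j = 0 then v else cols n M (\<sigma> j))"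

lemma deriv_val_iff_sum_bit:
  "deriv_val f k u \<longleftrightarrow> (\<Sum>C\<in>Pow {1..k}. of_bool (f (vadd (vsum u C) (u 0))) :: bit) = 1"
proof -
  have "(of_bool (deriv_val f k u) :: bit) = (\<Sum>C\<in>Pow {1..k}. of_bool (f (vadd (vsum u C) (u 0))))"
    unfolding deriv_val_def by (rule of_bool_odd_card_eq_sum) simp
  then show ?thesis
    by (metis of_bool_bit_eq_one_iff)
qed

lemma anf_comp_aff_eq_deriv_val:
  assumes M: "M \<in> mats n" and S: "S \<subseteq> {0..<n}" and \<sigma>: "bij_betw \<sigma> {1..k} S"
  shows "anf n (f \<circ> aff n M v) S \<longleftrightarrow> deriv_val f k (aff_tuple n k \<sigma> M v)"
proof -
  let ?u = "aff_tuple n k \<sigma> M v"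
  have inj: "inj_on \<sigma> {1..k}" and img: "\<sigma> ` {1..k} = S"
    using \<sigma> by (auto simp: bij_betw_def)
  have aff_image: "aff n M v (char_vec (\<sigma> ` C)) = vadd (vsum ?u C) (?u 0)" if "C \<in> Pow {1..k}" for C
  proof -
    have "vsum ?u C = vsum (cols n M \<circ> \<sigma>) C"
      using that by (intro vsum_cong) (auto simp: aff_tuple_def)
    also have "\<dots> = vsum (cols n M) (\<sigma> ` C)"
      using that by (intro vsum_image[symmetric] inj_on_subset[OF inj]) auto
    also have "\<dots> = mulv n M (char_vec (\<sigma> ` C))"
      using that img S by (intro mulv_char_vec[OF M, symmetric]) auto
    finally show ?thesis
      by (simp add: aff_tuple_def aff_def)
  qed
  have "Pow S = image \<sigma> ` Pow {1..k}"
    using image_Pow_surj[OF img] by simp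
  then have "(\<Sum>T\<in>Pow S. of_bool ((f \<circ> aff n M v) (char_vec T)) :: bit) =
      (\<Sum>C\<in>Pow {1..k}. of_bool (f (aff n M v (char_vec (\<sigma> ` C)))))"
    using sum.reindex[OF inj_on_image_Pow[OF inj], of "\<lambda>T. of_bool (f (aff n M v (char_vec T))) :: bit"]
    by simp
  also have "\<dots> = (\<Sum>C\<in>Pow {1..k}. of_bool (f (vadd (vsum ?u C) (?u 0))))"
    by (rule sum.cong[OF refl]) (simp only: aff_image)
  finally show ?thesis
    unfolding anf_iff deriv_val_iff_sum_bit using S by simp
qed

lemma card_preimage_uniform_fibers:
  assumes "finite P" "finite Q" "\<And>p. p \<in> P \<Longrightarrow> \<Phi> p \<in> Q"
    and "\<And>u. u \<in> Q \<Longrightarrow> card {p\<in>P. \<Phi> p = u} = c" and "R \<subseteq> Q"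
  shows "card {p\<in>P. \<Phi> p \<in> R} = c * card R"
proof -
  have "card {p\<in>P. \<Phi> p \<in> R} = card (\<Union>u\<in>R. {p\<in>P. \<Phi> p = u})"
    by (rule arg_cong[where f = card]) blast
  also have "\<dots> = (\<Sum>u\<in>R. card {p\<in>P. \<Phi> p = u})"
    by (rule card_UN_disjoint) (use assms(1,2,5) finite_subset in auto)
  also have "\<dots> = c * card R"
    using assms(4,5) by (simp add: subset_iff)
  finally show ?thesis .
qed

lemma finite_tuples: "finite (tuples n k)"
  unfolding tuples_def by (rule finite_PiE) auto

lemma aff_tuple_lin_indep:
  assumes M: "M \<in> GL n" and v: "v \<in> vecs n" and S: "S \<subseteq> {0..<n}" and \<sigma>: "bij_betw \<sigma> {1..k} S"
  shows "aff_tuple n k \<sigma> M v \<in> tuples n k" "lin_indep k (aff_tuple n k \<sigma> M v)"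
proof -
  have cols: "M \<in> mats n" "indep_on {0..<n} (cols n M)"
    using M by (auto simp: GL_iff_indep_on_cols)
  have inj: "inj_on \<sigma> {1..k}" and img: "\<sigma> ` {1..k} = S"
    using \<sigma> by (auto simp: bij_betw_def)
  have "\<sigma> j \<in> {0..<n}" if "j \<in> {1..k}" for j
    using that img S by blast
  then show "aff_tuple n k \<sigma> M v \<in> tuples n k"
    using v cols_vecs[OF cols(1)] by (auto simp: tuples_def aff_tuple_def)
  have "indep_on (\<sigma> ` {1..k}) (cols n M)"
    using indep_on_subset[OF _ cols(2)] img S by simp
  then have "indep_on {1..k} (cols n M \<circ> \<sigma>)"
    using indep_on_image_iff[OF inj] by blast
  moreover have "indep_on {1..k} (aff_tuple n k \<sigma> M v) = indep_on {1..k} (cols n M \<circ> \<sigma>)"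
    by (rule indep_on_cong) (auto simp: aff_tuple_def)
  ultimately show "lin_indep k (aff_tuple n k \<sigma> M v)"
    by (simp add: lin_indep_eq_indep_on)
qed

lemma aff_tuple_eq_iff:
  assumes S: "S \<subseteq> {0..<n}" and img: "\<sigma> ` {1..k} = S" and u: "u \<in> extensional {0..k}"
    and w0: "\<And>j. j \<in> {1..k} \<Longrightarrow> w0 (\<sigma> j) = u j"
  shows "aff_tuple n k \<sigma> M v = u \<longleftrightarrow> v = u 0 \<and> (\<forall>a\<in>S. (\<lambda>i. M i a) = w0 a)"
proof
  assume eq: "aff_tuple n k \<sigma> M v = u"
  have "(\<lambda>i. M i (\<sigma> j)) = w0 (\<sigma> j)" if "j \<in> {1..k}" for j
  proof -
    have "\<sigma> j \<in> {0..<n}" using that img S by blast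
    then show ?thesis
      using that eq[symmetric] w0[OF that] by (auto simp: aff_tuple_def cols_def)
  qed
  moreover have "v = u 0"
    using eq[symmetric] by (simp add: aff_tuple_def)
  ultimately show "v = u 0 \<and> (\<forall>a\<in>S. (\<lambda>i. M i a) = w0 a)"
    using img by blast
next
  assume eq: "v = u 0 \<and> (\<forall>a\<in>S. (\<lambda>i. M i a) = w0 a)"
  show "aff_tuple n k \<sigma> M v = u"
    unfolding aff_tuple_def
  proof (rule extensionalityI[OF restrict_extensional u])
    fix j assume j: "j \<in> {0..k}"
    show "restrict (\<lambda>j. if j = 0 then v else cols n M (\<sigma> j)) {0..k} j = u j"
    proof (cases "j = 0")
      case False
      then have "j \<in> {1..k}" using j by auto
      moreover from this have "\<sigma> j \<in> S" using img by auto
      ultimately show ?thesis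
        using S eq j False w0 by (auto simp: cols_def)
    qed (use eq in simp)
  qed
qed

text \<open>Fixing the tuple fixes v and the k columns of M indexed by S; the remaining n - k
  columns complete them to a basis.\<close>

lemma card_aff_tuple_fiber:
  assumes S: "S \<subseteq> {0..<n}" and \<sigma>: "bij_betw \<sigma> {1..k} S"
    and u: "u \<in> tuples n k" "lin_indep k u"
  shows "card {p \<in> GL n \<times> vecs n. aff_tuple n k \<sigma> (fst p) (snd p) = u} = (\<Prod>i\<in>{k..<n}. 2 ^ n - 2 ^ i)"
proof -
  have inj: "inj_on \<sigma> {1..k}" and img: "\<sigma> ` {1..k} = S"
    using \<sigma> by (auto simp: bij_betw_def)
  define w0 where "w0 a = u (inv_into {1..k} \<sigma> a)" for a
  have w0: "w0 (\<sigma> j) = u j" if "j \<in> {1..k}" for j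
    unfolding w0_def using inv_into_f_f[OF inj that] by simp
  have uP: "u \<in> PiE {0..k} (\<lambda>_. vecs n)"
    using u(1) unfolding tuples_def .
  then have ext: "u \<in> extensional {0..k}"
    by (simp add: PiE_def)
  then have "{p \<in> GL n \<times> vecs n. aff_tuple n k \<sigma> (fst p) (snd p) = u} =
      {M \<in> GL n. \<forall>a\<in>S. (\<lambda>i. M i a) = w0 a} \<times> {u 0}"
    using aff_tuple_eq_iff[OF S img ext w0] uP by (auto simp: PiE_def Pi_def)
  moreover have "indep_on S w0"
    using u(2) img indep_on_image_iff[OF inj] indep_on_cong[of "{1..k}" "w0 \<circ> \<sigma>" u] w0
    by (simp add: lin_indep_eq_indep_on)
  moreover have "\<forall>a\<in>S. w0 a \<in> vecs n"
    using img w0 uP by auto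
  moreover have "card S = k"
    using bij_betw_same_card[OF \<sigma>] by simp
  ultimately show ?thesis
    using card_GL_fixed_cols[OF S] by (simp add: card_cartesian_product)
qed

lemma card_aff_tuple_preimage:
  assumes S: "S \<subseteq> {0..<n}" and \<sigma>: "bij_betw \<sigma> {1..k} S"
    and R: "R \<subseteq> {u \<in> tuples n k. lin_indep k u}"
  shows "card {p \<in> GL n \<times> vecs n. aff_tuple n k \<sigma> (fst p) (snd p) \<in> R} =
    (\<Prod>i\<in>{k..<n}. 2 ^ n - 2 ^ i) * card R"
  using R aff_tuple_lin_indep[OF _ _ S \<sigma>] card_aff_tuple_fiber[OF S \<sigma>]
  by (intro card_preimage_uniform_fibers) (auto simp: finite_GL finite_tuples)

lemma ex_bij_betw_one_to_card: "finite S \<Longrightarrow> \<exists>\<sigma>. bij_betw \<sigma> {1..card S} S"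
  by (subst bij_betw_iff_card) auto

lemma card_GL_times_vecs:
  assumes "k \<le> n"
  shows "card (GL n \<times> vecs n) = (\<Prod>i\<in>{k..<n}. 2 ^ n - 2 ^ i) * card {u \<in> tuples n k. lin_indep k u}"
proof -
  obtain \<sigma> where \<sigma>: "bij_betw \<sigma> {1..k} {0..<k}"
    using ex_bij_betw_one_to_card[of "{0..<k}"] by auto
  have "{p \<in> GL n \<times> vecs n. aff_tuple n k \<sigma> (fst p) (snd p) \<in> {u \<in> tuples n k. lin_indep k u}} =
      GL n \<times> vecs n"
    using aff_tuple_lin_indep[OF _ _ _ \<sigma>] assms by auto
  then show ?thesis
    using card_aff_tuple_preimage[OF _ \<sigma>, of n "{u \<in> tuples n k. lin_indep k u}"] assms by simp
qed

lemma card_anf_comp_aff: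
  assumes S: "S \<subseteq> {0..<n}" "card S = k"
  shows "card {p \<in> GL n \<times> vecs n. anf n (f \<circ> aff n (fst p) (snd p)) S} =
    (\<Prod>i\<in>{k..<n}. 2 ^ n - 2 ^ i) * card {u \<in> tuples n k. lin_indep k u \<and> deriv_val f k u}"
proof -
  let ?R = "{u \<in> tuples n k. lin_indep k u \<and> deriv_val f k u}"
  obtain \<sigma> where \<sigma>: "bij_betw \<sigma> {1..k} S"
    using ex_bij_betw_one_to_card[of S] S finite_subset by auto
  have "anf n (f \<circ> aff n M v) S \<longleftrightarrow> aff_tuple n k \<sigma> M v \<in> ?R" if "M \<in> GL n" "v \<in> vecs n" for M v
    using aff_tuple_lin_indep[OF that S(1) \<sigma>] anf_comp_aff_eq_deriv_val[OF _ S(1) \<sigma>] that(1)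
    by (simp add: GL_def)
  then have "{p \<in> GL n \<times> vecs n. aff_tuple n k \<sigma> (fst p) (snd p) \<in> ?R} =
      {p \<in> GL n \<times> vecs n. anf n (f \<circ> aff n (fst p) (snd p)) S}"
    by auto
  then show ?thesis
    using card_aff_tuple_preimage[OF S(1) \<sigma>, of ?R] by auto
qed

lemma sum_dd_comp_aff:
  assumes "k \<le> n"
  shows "(\<Sum>M\<in>GL n. \<Sum>v\<in>vecs n. dd n k (f \<circ> aff n M v)) =
    real ((\<Prod>i\<in>{k..<n}. 2 ^ n - 2 ^ i) * card {u \<in> tuples n k. lin_indep k u \<and> deriv_val f k u})"
    (is "_ = real ?N")
proof -
  let ?SS = "{S. S \<subseteq> {0..<n} \<and> card S = k}"
  let ?A = "\<lambda>p S. anf n (f \<circ> aff n (fst p) (snd p)) S"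
  have fin: "finite ?SS" "finite (GL n \<times> vecs n)"
    by (auto intro: finite_subset[of _ "Pow {0..<n}"] simp: finite_GL)
  have dd_eq: "dd n k (f \<circ> aff n M v) = (\<Sum>S\<in>?SS. of_bool (?A (M, v) S)) / real (n choose k)" for M v
  proof -
    have "{S. S \<subseteq> {0..<n} \<and> card S = k \<and> anf n (f \<circ> aff n M v) S} = ?SS \<inter> {S. ?A (M, v) S}"
      by auto
    then show ?thesis
      unfolding dd_def using fin(1) by (simp add: sum_of_bool_eq)
  qed
  have "(\<Sum>M\<in>GL n. \<Sum>v\<in>vecs n. dd n k (f \<circ> aff n M v)) =
      (\<Sum>p\<in>GL n \<times> vecs n. (\<Sum>S\<in>?SS. of_bool (?A p S)) / real (n choose k))"
    unfolding dd_eq sum.cartesian_product by (simp add: case_prod_beta)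
  also have "\<dots> = (\<Sum>p\<in>GL n \<times> vecs n. \<Sum>S\<in>?SS. of_bool (?A p S)) / real (n choose k)"
    by (simp add: sum_divide_distrib)
  also have "\<dots> = (\<Sum>S\<in>?SS. \<Sum>p\<in>GL n \<times> vecs n. of_bool (?A p S)) / real (n choose k)"
    by (subst sum.swap) (rule refl)
  also have "\<dots> = (\<Sum>S\<in>?SS. real ?N) / real (n choose k)"
  proof -
    have "(\<Sum>p\<in>GL n \<times> vecs n. of_bool (?A p S)) = real ?N" if "S \<in> ?SS" for S
    proof -
      have "(GL n \<times> vecs n) \<inter> {p. ?A p S} = {p \<in> GL n \<times> vecs n. ?A p S}" by blast
      then show ?thesis
        using fin(2) that card_anf_comp_aff[of S n k f] by (simp add: sum_of_bool_eq)
    qed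
    then show ?thesis by simp
  qed
  also have "\<dots> = real ?N"
    using assms by (simp add: n_subsets)
  finally show ?thesis .
qed

lemma of_nat_prod_pow_diff:
  assumes "\<And>i. i \<in> A \<Longrightarrow> i \<le> n"
  shows "real (\<Prod>i\<in>A. 2 ^ n - 2 ^ i :: nat) = (\<Prod>i\<in>A. 2 ^ n - 2 ^ i :: real)"
  unfolding of_nat_prod using assms by (intro prod.cong refl) (simp add: of_nat_diff)

lemma card_lin_indep_tuples:
  assumes "k \<le> n"
  shows "card {u \<in> tuples n k. lin_indep k u} = 2 ^ n * (\<Prod>i<k. 2 ^ n - 2 ^ i)"
proof -
  have "(\<Prod>i\<in>{k..<n}. 2 ^ n - 2 ^ i :: nat) * card {u \<in> tuples n k. lin_indep k u} =
      (\<Prod>i\<in>{k..<n}. 2 ^ n - 2 ^ i) * (2 ^ n * (\<Prod>i<k. 2 ^ n - 2 ^ i))"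
    using card_GL_times_vecs[OF assms] card_GL card_vecs
      prod.atLeastLessThan_concat[of 0 k n "\<lambda>i. 2 ^ n - 2 ^ i :: nat"] assms
    by (simp add: card_cartesian_product atLeast0LessThan ac_simps)
  moreover have "(\<Prod>i\<in>{k..<n}. 2 ^ n - 2 ^ i :: nat) > 0"
    by (intro prod_pos) (simp add: power_strict_increasing)
  ultimately show ?thesis by simp
qed

lemma add_dens_eq:
  assumes "k \<le> n"
  shows "add_dens n k f =
    real (card {u \<in> tuples n k. lin_indep k u \<and> deriv_val f k u}) / real (card {u \<in> tuples n k. lin_indep k u})"
proof -
  let ?c = "\<Prod>i\<in>{k..<n}. 2 ^ n - 2 ^ i :: nat"
  have "2 ^ n * (\<Prod>i<n. 2 ^ n - 2 ^ i :: real) = real (card (GL n \<times> vecs n))"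
    by (simp add: card_cartesian_product card_GL card_vecs of_nat_prod_pow_diff)
  moreover have "?c > 0"
    by (intro prod_pos) (simp add: power_strict_increasing)
  ultimately show ?thesis
    unfolding add_dens_def sum_dd_comp_aff[OF assms] card_GL_times_vecs[OF assms] by simp
qed

lemma dt_eq: "dt n k f = real (card {u \<in> tuples n k. lin_indep k u \<and> deriv_val f k u}) / 2 ^ ((k + 1) * n)"
proof -
  have "{u \<in> tuples n k. deriv_val f k u} = {u \<in> tuples n k. lin_indep k u \<and> deriv_val f k u}"
    using not_deriv_val_if_not_lin_indep by blast
  then show ?thesis
    unfolding dt_def by simp
qed

lemma prod_one_minus_inverse_powers:
  assumes "k \<le> n"
  shows "(\<Prod>i\<in>{n-k+1..n}. 1 - 1 / 2 ^ i :: real) = (\<Prod>i<k. 2 ^ n - 2 ^ i) / 2 ^ (k * n)"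
proof -
  have "(\<Prod>i\<in>{n-k+1..n}. 1 - 1 / 2 ^ i :: real) = (\<Prod>i<k. 1 - 1 / 2 ^ (n - i))"
    using assms by (intro prod.reindex_bij_witness[where i = "\<lambda>i. n - i" and j = "\<lambda>i. n - i"]) auto
  also have "\<dots> = (\<Prod>i<k. (2 ^ n - 2 ^ i) / 2 ^ n)"
  proof (rule prod.cong[OF refl])
    fix i assume "i \<in> {..<k}"
    then have "(2::real) ^ n = 2 ^ i * 2 ^ (n - i)"
      using assms by (simp flip: power_add)
    then show "1 - 1 / 2 ^ (n - i) = ((2::real) ^ n - 2 ^ i) / 2 ^ n"
      by (simp add: field_simps)
  qed
  finally show ?thesis
    by (simp add: prod_dividef mult.commute flip: power_mult)
qed

theorem theorem1:
  fixes n k :: nat and f :: "(nat \<Rightarrow> bool) \<Rightarrow> bool"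
  assumes "1 \<le> k" and "k \<le> n"
  shows "dt n k f = add_dens n k f * (\<Prod>i\<in>{n-k+1..n}. (1 - 1 / 2 ^ i))
    \<and> add_dens n k f =
        real (card {u \<in> tuples n k. lin_indep k u \<and> deriv_val f k u}) /
        real (card {u \<in> tuples n k. lin_indep k u})"
proof
  let ?I = "card {u \<in> tuples n k. lin_indep k u}"
  show ad: "add_dens n k f = real (card {u \<in> tuples n k. lin_indep k u \<and> deriv_val f k u}) / real ?I"
    using add_dens_eq[OF assms(2)] .
  have "real ?I = 2 ^ n * (\<Prod>i<k. 2 ^ n - 2 ^ i)"
    using card_lin_indep_tuples[OF assms(2)] assms(2) by (simp add: of_nat_prod_pow_diff)
  moreover have "(\<Prod>i<k. 2 ^ n - 2 ^ i :: real) \<noteq> 0"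
    using assms(2) by (simp add: power_strict_increasing)
  ultimately have "(\<Prod>i\<in>{n-k+1..n}. 1 - 1 / 2 ^ i :: real) = real ?I / 2 ^ ((k + 1) * n)"
    unfolding prod_one_minus_inverse_powers[OF assms(2)] by (simp add: power_add field_simps)
  then show "dt n k f = add_dens n k f * (\<Prod>i\<in>{n-k+1..n}. (1 - 1 / 2 ^ i))"
    unfolding dt_eq ad using \<open>real ?I = _\<close> \<open>_ \<noteq> 0\<close> by simp
qed

end
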